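(* Let $V$ be a finite-dimensional vector space over a field $\mathbf{k}$, $W\subseteq V$ a subspace, $q\in \mathrm{End}(V)$ a $W$-idempotent, and $k\in\mathbf{k}$. Let $(\mathcal{L},[\,,\,])$ be a Lie algebra over $\mathbf{k}$ and let $\varphi:\mathcal{L}\to \mathfrak{gl}^{[\,,\,]_{6,k}}_{q,W}(V)$ be a representation$^{6\text{-th}}$ of $\mathcal{L}$ on $V$ induced by $(q,W)$. Define, for $x\in\mathcal{L}$, $$f(x)=\varphi(x)+kq\varphi(x)-\varphi(x)q,\qquad g(x)=k\varphi(x)q.$$ Then $f:\mathcal{L}\to\mathfrak{gl}(V)$ and $g:\mathcal{L}\to\mathfrak{gl}(V)$ are both ordinary representations of $\mathcal{L}$ on $V$, i.e. Lie algebra homomorphisms into $\mathrm{End}(V)$ with the commutator bracket $[a,b]=ab-ba$.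
   Context: A linear map $q\in\mathrm{End}(V)$ is a $W$-idempotent if $q(W)=0$ and $(q-I)(V)\subseteq W$ ($I$ the identity map); such $q$ is idempotent. $\mathrm{End}_W(V)=\{f\in\mathrm{End}(V): f(W)\subseteq W\}$, which equals $\{f\in\mathrm{End}(V): qfq=qf\}$. The 6-th general linear Lie algebra $\mathfrak{gl}^{[\,,\,]_{6,k}}_{q,W}(V)$ is $\mathrm{End}_W(V)$ with bracket $[f,g]_{6,k}=fg-gf-fgq+gfq+kfqg-kgqf$. A representation$^{6\text{-th}}$ of a Lie algebra $\mathcal{L}$ on $V$ induced by $(q,W)$ is a Lie algebra homomorphism $\mathcal{L}\to \mathfrak{gl}^{[\,,\,]_{6,k}}_{q,W}(V)$. *)

theory Defs
  imports "HOL.Vector_Spaces"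
begin

definition lie_algebra :: "('k::field \<Rightarrow> 'l::ab_group_add \<Rightarrow> 'l) \<Rightarrow> ('l \<Rightarrow> 'l \<Rightarrow> 'l) \<Rightarrow> bool" where
  "lie_algebra sL br \<longleftrightarrow>
     Vector_Spaces.vector_space sL \<and>
     (\<forall>a x y z. br (sL a x + y) z = sL a (br x z) + br y z) \<and>
     (\<forall>a x y z. br x (sL a y + z) = sL a (br x y) + br x z) \<and>
     (\<forall>x. br x x = 0) \<and>
     (\<forall>x y z. br x (br y z) + br y (br z x) + br z (br x y) = 0)"

definition fin_dim_vs :: "('k::field \<Rightarrow> 'v::ab_group_add \<Rightarrow> 'v) \<Rightarrow> bool" where
  "fin_dim_vs s \<longleftrightarrow> (\<exists>B. Vector_Spaces.finite_dimensional_vector_space s B)"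

definition W_idempotent :: "('k::field \<Rightarrow> 'v::ab_group_add \<Rightarrow> 'v) \<Rightarrow> 'v set \<Rightarrow> ('v \<Rightarrow> 'v) \<Rightarrow> bool" where
  "W_idempotent s W q \<longleftrightarrow>
     Vector_Spaces.linear s s q \<and> (\<forall>w\<in>W. q w = 0) \<and> (\<forall>v. q v - v \<in> W)"

definition End_W :: "('k::field \<Rightarrow> 'v::ab_group_add \<Rightarrow> 'v) \<Rightarrow> 'v set \<Rightarrow> ('v \<Rightarrow> 'v) \<Rightarrow> bool" where
  "End_W s W f \<longleftrightarrow> Vector_Spaces.linear s s f \<and> f ` W \<subseteq> W"

definition bracket6 :: "('k::field \<Rightarrow> 'v::ab_group_add \<Rightarrow> 'v) \<Rightarrow> 'k \<Rightarrow> ('v \<Rightarrow> 'v) \<Rightarrow> ('v \<Rightarrow> 'v) \<Rightarrow> ('v \<Rightarrow> 'v) \<Rightarrow> ('v \<Rightarrow> 'v)" where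
  "bracket6 s k q f g = (\<lambda>v. f (g v) - g (f v) - f (g (q v)) + g (f (q v))
                              + s k (f (q (g v))) - s k (g (q (f v))))"

definition lin_into_End :: "('k::field \<Rightarrow> 'l::ab_group_add \<Rightarrow> 'l) \<Rightarrow> ('k \<Rightarrow> 'v::ab_group_add \<Rightarrow> 'v) \<Rightarrow> ('l \<Rightarrow> 'v \<Rightarrow> 'v) \<Rightarrow> bool" where
  "lin_into_End sL s \<phi> \<longleftrightarrow> (\<forall>a x y v. \<phi> (sL a x + y) v = s a (\<phi> x v) + \<phi> y v)"

definition rep6 :: "('k::field \<Rightarrow> 'l::ab_group_add \<Rightarrow> 'l) \<Rightarrow> ('l \<Rightarrow> 'l \<Rightarrow> 'l) \<Rightarrow> ('k \<Rightarrow> 'v::ab_group_add \<Rightarrow> 'v)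
     \<Rightarrow> 'v set \<Rightarrow> ('v \<Rightarrow> 'v) \<Rightarrow> 'k \<Rightarrow> ('l \<Rightarrow> 'v \<Rightarrow> 'v) \<Rightarrow> bool" where
  "rep6 sL br s W q k \<phi> \<longleftrightarrow>
     lin_into_End sL s \<phi> \<and> (\<forall>x. End_W s W (\<phi> x)) \<and>
     (\<forall>x y. \<phi> (br x y) = bracket6 s k q (\<phi> x) (\<phi> y))"

definition gl_rep :: "('k::field \<Rightarrow> 'l::ab_group_add \<Rightarrow> 'l) \<Rightarrow> ('l \<Rightarrow> 'l \<Rightarrow> 'l) \<Rightarrow> ('k \<Rightarrow> 'v::ab_group_add \<Rightarrow> 'v)
     \<Rightarrow> ('l \<Rightarrow> 'v \<Rightarrow> 'v) \<Rightarrow> bool" where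
  "gl_rep sL br s \<phi> \<longleftrightarrow>
     lin_into_End sL s \<phi> \<and> (\<forall>x. Vector_Spaces.linear s s (\<phi> x)) \<and>
     (\<forall>x y. \<phi> (br x y) = (\<lambda>v. \<phi> x (\<phi> y v) - \<phi> y (\<phi> x v)))"

end

theory Submission
  imports Defs
begin

text \<open>
  Write A, B for endomorphisms in End_W(V) and q for the W-idempotent.
  Only two identities about q are needed: q is idempotent (q q = q), and q absorbs a
  right factor q after any W-invariant map (q A q = q A); both follow from q(W) = 0
  and (q - I)(V) \<subseteq> W.  Using them, a direct expansion shows that the two transforms
    F(A) = A + k q A - A q    and    G(A) = k A q
  turn the 6-th bracket into the commutator:
    F([A,B]_{6,k}) = F(A) F(B) - F(B) F(A)   and   G([A,B]_{6,k}) = G(A) G(B) - G(B) G(A).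
  Both transforms are linear in A and send linear maps to linear maps.  Composing a
  representation^{6-th} \<phi> with F or G therefore yields ordinary representations.
\<close>

definition transform_f :: "('k::field \<Rightarrow> 'v::ab_group_add \<Rightarrow> 'v) \<Rightarrow> 'k \<Rightarrow> ('v \<Rightarrow> 'v) \<Rightarrow> ('v \<Rightarrow> 'v) \<Rightarrow> ('v \<Rightarrow> 'v)"
  where "transform_f s k q A = (\<lambda>v. A v + s k (q (A v)) - A (q v))"

definition transform_g :: "('k::field \<Rightarrow> 'v::ab_group_add \<Rightarrow> 'v) \<Rightarrow> 'k \<Rightarrow> ('v \<Rightarrow> 'v) \<Rightarrow> ('v \<Rightarrow> 'v) \<Rightarrow> ('v \<Rightarrow> 'v)"
  where "transform_g s k q A = (\<lambda>v. s k (A (q v)))"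

context
  fixes s :: "'k::field \<Rightarrow> 'v::ab_group_add \<Rightarrow> 'v" and W :: "'v set" and q :: "'v \<Rightarrow> 'v"
  assumes W_idem: "W_idempotent s W q"
begin

lemma W_idempotent_linear: "Vector_Spaces.linear s s q"
  using W_idem unfolding W_idempotent_def by blast

text \<open>A W-idempotent is idempotent: q v - v lies in W, which q kills.\<close>
lemma W_idempotent_idem: "q (q v) = q v"
proof -
  interpret Q: Vector_Spaces.linear s s q by (rule W_idempotent_linear)
  have "q (q v - v) = 0" using W_idem unfolding W_idempotent_def by blast
  then show ?thesis by (simp add: Q.diff)
qed

text \<open>q A q = q A for every W-invariant linear A, since A(q v - v) \<in> W.\<close>
lemma W_idempotent_absorb:
  assumes "End_W s W A"
  shows "q (A (q v)) = q (A v)"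
proof -
  interpret Q: Vector_Spaces.linear s s q by (rule W_idempotent_linear)
  interpret A: Vector_Spaces.linear s s A using assms unfolding End_W_def by blast
  have "A (q v - v) \<in> W" using assms W_idem unfolding End_W_def W_idempotent_def by blast
  then have "q (A (q v - v)) = 0" using W_idem unfolding W_idempotent_def by blast
  then show ?thesis by (simp add: A.diff Q.diff)
qed

end

context
  fixes s :: "'k::field \<Rightarrow> 'v::ab_group_add \<Rightarrow> 'v" and q A B :: "'v \<Rightarrow> 'v" and k :: 'k
  assumes lin_q: "Vector_Spaces.linear s s q"
    and lin_A: "Vector_Spaces.linear s s A"
    and lin_B: "Vector_Spaces.linear s s B"
    and idem: "\<And>v. q (q v) = q v"
    and absorb_A: "\<And>v. q (A (q v)) = q (A v)"
    and absorb_B: "\<And>v. q (B (q v)) = q (B v)"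
begin

interpretation Q: Vector_Spaces.linear s s q by (rule lin_q)
interpretation A: Vector_Spaces.linear s s A by (rule lin_A)
interpretation B: Vector_Spaces.linear s s B by (rule lin_B)

lemmas expand = A.add A.scale A.diff A.neg B.add B.scale B.diff B.neg
  Q.add Q.scale Q.diff Q.neg idem absorb_A absorb_B
  Q.vs1.scale_right_distrib Q.vs1.scale_right_diff_distrib Q.vs1.scale_minus_right Q.vs1.scale_scale

lemma transform_f_bracket6:
  "transform_f s k q (bracket6 s k q A B)
     = (\<lambda>v. transform_f s k q A (transform_f s k q B v) - transform_f s k q B (transform_f s k q A v))"
  by (rule ext) (simp add: transform_f_def bracket6_def expand algebra_simps)

lemma transform_g_bracket6:
  "transform_g s k q (bracket6 s k q A B)
     = (\<lambda>v. transform_g s k q A (transform_g s k q B v) - transform_g s k q B (transform_g s k q A v))"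
  by (rule ext) (simp add: transform_g_def bracket6_def expand algebra_simps)

end

lemma
  assumes lin_q: "Vector_Spaces.linear s s q" and lin_A: "Vector_Spaces.linear s s A"
  shows transform_f_linear: "Vector_Spaces.linear s s (transform_f s k q A)"
    and transform_g_linear: "Vector_Spaces.linear s s (transform_g s k q A)"
proof -
  interpret Q: Vector_Spaces.linear s s q by (rule lin_q)
  interpret A: Vector_Spaces.linear s s A by (rule lin_A)
  show "Vector_Spaces.linear s s (transform_f s k q A)"
    by unfold_locales
      (simp_all add: transform_f_def A.add A.scale Q.add Q.scale
        Q.vs1.scale_right_distrib Q.vs1.scale_right_diff_distrib Q.vs1.scale_scale
        algebra_simps mult.commute)
  show "Vector_Spaces.linear s s (transform_g s k q A)"
    by unfold_locales
      (simp_all add: transform_g_def A.add A.scale Q.add Q.scale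
        Q.vs1.scale_right_distrib Q.vs1.scale_scale mult.commute)
qed

lemma
  assumes lin_q: "Vector_Spaces.linear s s q" and lin_\<phi>: "lin_into_End sL s \<phi>"
  shows transform_f_lin_into_End: "lin_into_End sL s (\<lambda>x. transform_f s k q (\<phi> x))"
    and transform_g_lin_into_End: "lin_into_End sL s (\<lambda>x. transform_g s k q (\<phi> x))"
proof -
  interpret Q: Vector_Spaces.linear s s q by (rule lin_q)
  have \<phi>: "\<phi> (sL a x + y) v = s a (\<phi> x v) + \<phi> y v" for a x y v
    using lin_\<phi> unfolding lin_into_End_def by blast
  show "lin_into_End sL s (\<lambda>x. transform_f s k q (\<phi> x))"
    unfolding lin_into_End_def transform_f_def
    by (intro allI) (simp only: \<phi>, simp add: Q.add Q.scale Q.vs1.scale_right_distrib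
        Q.vs1.scale_right_diff_distrib Q.vs1.scale_scale algebra_simps mult.commute)
  show "lin_into_End sL s (\<lambda>x. transform_g s k q (\<phi> x))"
    unfolding lin_into_End_def transform_g_def
    by (intro allI)
      (simp only: \<phi>, simp add: Q.vs1.scale_right_distrib Q.vs1.scale_scale mult.commute)
qed

lemma End_W_linear: "End_W s W A \<Longrightarrow> Vector_Spaces.linear s s A"
  unfolding End_W_def by blast

lemma gl_rep_of_rep6:
  assumes rep: "rep6 sL br s W q k \<phi>"
    and T_lin_into_End: "lin_into_End sL s (\<lambda>x. T (\<phi> x))"
    and T_linear: "\<And>A. End_W s W A \<Longrightarrow> Vector_Spaces.linear s s (T A)"
    and T_bracket: "\<And>A B. End_W s W A \<Longrightarrow> End_W s W B \<Longrightarrow>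
                      T (bracket6 s k q A B) = (\<lambda>v. T A (T B v) - T B (T A v))"
  shows "gl_rep sL br s (\<lambda>x. T (\<phi> x))"
  using rep T_lin_into_End T_linear T_bracket unfolding rep6_def gl_rep_def by simp

context
  fixes s :: "'k::field \<Rightarrow> 'v::ab_group_add \<Rightarrow> 'v" and W :: "'v set" and q :: "'v \<Rightarrow> 'v" and k :: 'k
  assumes W_idem: "W_idempotent s W q"
begin

lemma
  assumes "End_W s W A" "End_W s W B"
  shows transform_f_bracket6_End_W:
      "transform_f s k q (bracket6 s k q A B)
        = (\<lambda>v. transform_f s k q A (transform_f s k q B v) - transform_f s k q B (transform_f s k q A v))"
    and transform_g_bracket6_End_W:
      "transform_g s k q (bracket6 s k q A B)
        = (\<lambda>v. transform_g s k q A (transform_g s k q B v) - transform_g s k q B (transform_g s k q A v))"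
  using W_idempotent_linear[OF W_idem] End_W_linear[OF assms(1)] End_W_linear[OF assms(2)]
    W_idempotent_idem[OF W_idem]
    W_idempotent_absorb[OF W_idem assms(1)] W_idempotent_absorb[OF W_idem assms(2)]
  by (rule transform_f_bracket6, rule transform_g_bracket6)

lemma rep6_transform_f_gl_rep:
  assumes rep: "rep6 sL br s W q k \<phi>"
  shows "gl_rep sL br s (\<lambda>x. transform_f s k q (\<phi> x))"
proof (rule gl_rep_of_rep6[where T = "transform_f s k q", OF rep])
  show "lin_into_End sL s (\<lambda>x. transform_f s k q (\<phi> x))"
    using W_idempotent_linear[OF W_idem] rep unfolding rep6_def
    by (blast intro: transform_f_lin_into_End)
qed (blast intro: transform_f_linear W_idempotent_linear[OF W_idem] End_W_linear,
     rule transform_f_bracket6_End_W)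

lemma rep6_transform_g_gl_rep:
  assumes rep: "rep6 sL br s W q k \<phi>"
  shows "gl_rep sL br s (\<lambda>x. transform_g s k q (\<phi> x))"
proof (rule gl_rep_of_rep6[where T = "transform_g s k q", OF rep])
  show "lin_into_End sL s (\<lambda>x. transform_g s k q (\<phi> x))"
    using W_idempotent_linear[OF W_idem] rep unfolding rep6_def
    by (blast intro: transform_g_lin_into_End)
qed (blast intro: transform_g_linear W_idempotent_linear[OF W_idem] End_W_linear,
     rule transform_g_bracket6_End_W)

end

theorem proposition2p1:
  fixes s :: "'k::field \<Rightarrow> 'v::ab_group_add \<Rightarrow> 'v"
    and sL :: "'k \<Rightarrow> 'l::ab_group_add \<Rightarrow> 'l"
    and br :: "'l \<Rightarrow> 'l \<Rightarrow> 'l"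
    and W :: "'v set" and q :: "'v \<Rightarrow> 'v" and k :: 'k
    and \<phi> :: "'l \<Rightarrow> 'v \<Rightarrow> 'v"
  assumes "fin_dim_vs s"
    and "module.subspace s W"
    and "W_idempotent s W q"
    and "lie_algebra sL br"
    and "rep6 sL br s W q k \<phi>"
  shows "gl_rep sL br s (\<lambda>x v. \<phi> x v + s k (q (\<phi> x v)) - \<phi> x (q v))
         \<and> gl_rep sL br s (\<lambda>x v. s k (\<phi> x (q v)))"
proof -
  have "gl_rep sL br s (\<lambda>x. transform_f s k q (\<phi> x))"
    and "gl_rep sL br s (\<lambda>x. transform_g s k q (\<phi> x))"
    using assms(3,5) by (rule rep6_transform_f_gl_rep, rule rep6_transform_g_gl_rep)
  then show ?thesis unfolding transform_f_def transform_g_def by blast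
qed

end
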